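(* Let $\mathbf{M}\in\mathbb{R}^{N\times N}$ be symmetric with eigenvalues $\lambda_1>\lambda_2\ge\lambda_3\ge\cdots\ge\lambda_N$, and let $g(\bm{x})=-\tfrac12\bm{x}^\top\mathbf{M}\bm{x}$ be restricted to the unit sphere $\mathbb{S}^{N-1}$. Set $\epsilon=0.2(\lambda_1-\lambda_2)$ and $\eta=0.3(\lambda_1-\lambda_2)$. Then for every $\bm{x}\in\mathbb{S}^{N-1}$ with $\|\mathrm{grad}\,g(\bm{x})\|_2\le\epsilon$ we have $|\lambda_{\min}(\mathrm{hess}\,g(\bm{x}))|\ge\eta$.
   Context: $\mathbb{S}^{N-1}=\{\bm{x}\in\mathbb{R}^N:\|\bm{x}\|_2=1\}$. The Riemannian gradient and Hessian of $g$ on the sphere are $\mathrm{grad}\,g(\bm{x})=(\bm{x}\bm{x}^\top-\mathbf{I}_N)\mathbf{M}\bm{x}$ and $\mathrm{hess}\,g(\bm{x})=(\mathbf{I}_N-\bm{x}\bm{x}^\top)(\bm{x}^\top\mathbf{M}\bm{x}\,\mathbf{I}_N-\mathbf{M})(\mathbf{I}_N-\bm{x}\bm{x}^\top)$, the latter regarded as a quadratic form on the tangent space $\mathcal{T}_{\bm{x}}\mathbb{S}^{N-1}=\{\bm{u}\in\mathbb{R}^N:\bm{x}^\top\bm{u}=0\}$; thus $\lambda_{\min}(\mathrm{hess}\,g(\bm{x}))=\min\{\bm{u}^\top\mathrm{hess}\,g(\bm{x})\bm{u}:\bm{u}\in\mathcal{T}_{\bm{x}}\mathbb{S}^{N-1},\|\bm{u}\|_2=1\}=\min\{\bm{x}^\top\mathbf{M}\bm{x}-\bm{u}^\top\mathbf{M}\bm{u}:\bm{x}^\top\bm{u}=0,\|\bm{u}\|_2=1\}$.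 *)

theory Defs
  imports "Jordan_Normal_Form.Char_Poly"
begin

definition outer_vec :: "real vec \<Rightarrow> real mat" where
  "outer_vec x = mat (dim_vec x) (dim_vec x) (\<lambda>(i,j). x $ i * x $ j)"

text \<open>Riemannian gradient of g(x) = -1/2 x^T M x on the sphere: (x x^T - I) M x.\<close>
definition sphere_grad :: "real mat \<Rightarrow> real vec \<Rightarrow> real vec" where
  "sphere_grad M x = (outer_vec x - 1\<^sub>m (dim_vec x)) *\<^sub>v (M *\<^sub>v x)"

definition sphere_hess :: "real mat \<Rightarrow> real vec \<Rightarrow> real mat" where
  "sphere_hess M x =
     (let n = dim_vec x; P = 1\<^sub>m n - outer_vec x
      in P * ((x \<bullet> (M *\<^sub>v x)) \<cdot>\<^sub>m 1\<^sub>m n - M) * P)"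

text \<open>Smallest eigenvalue of the Hessian regarded as a quadratic form on the tangent space.\<close>
definition lambda_min_hess :: "real mat \<Rightarrow> real vec \<Rightarrow> real" where
  "lambda_min_hess M x =
     Inf {u \<bullet> (sphere_hess M x *\<^sub>v u) | u. u \<in> carrier_vec (dim_vec x) \<and> x \<bullet> u = 0 \<and> u \<bullet> u = 1}"

definition vnorm :: "real vec \<Rightarrow> real" where
  "vnorm x = sqrt (x \<bullet> x)"

end

(*
  Let v be a unit eigenvector for lam 0, put d = lam 0 - lam 1 and r = x' M x.  Deflating v
  and inducting on the remaining eigenvalues shows that the quadratic form of M is at most
  lam 1 |z|^2 on the orthogonal complement of v.  On the tangent space at x the Hessian is
  the form u |-> r - u' M u.

  If r >= lam 1 + d/2, testing the gradient r x - M x against the component y of x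
  orthogonal to v gives (d/2) |y|^2 <= 0.2 d |y|, so |y|^2 <= 0.16.  By Bessel's inequality
  every unit tangent u has (u.v)^2 <= 1 - (x.v)^2 = |y|^2, hence u' M u <= lam 1 + 0.16 d and
  the Hessian is at least 0.34 d.  If r < lam 1 + d/2, testing the gradient against v gives
  (x.v)^2 <= 0.16, and the normalised tangent part of v has Hessian value
  -(lam 0 - r)(1 - 2 (x.v)^2)/(1 - (x.v)^2) <= -0.3 d.
*)
theory Submission
  imports Defs "Jordan_Normal_Form.Schur_Decomposition"
begin

lemma scalar_prod_self_nonneg: "0 \<le> (v :: real vec) \<bullet> v"
  using conjugate_square_ge_0_vec[of v] by simp

lemma scalar_prod_self_eq_0_iff:
  "(v :: real vec) \<in> carrier_vec n \<Longrightarrow> v \<bullet> v = 0 \<longleftrightarrow> v = 0\<^sub>v n"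
  using conjugate_square_eq_0_vec[of v n] by simp

lemma scalar_prod_self_normalize:
  fixes u :: "real vec"
  assumes "u \<in> carrier_vec n" and "u \<bullet> u \<noteq> 0"
  shows "((1 / sqrt (u \<bullet> u)) \<cdot>\<^sub>v u) \<bullet> ((1 / sqrt (u \<bullet> u)) \<cdot>\<^sub>v u) = 1"
  using assms scalar_prod_self_nonneg[of u] by simp

lemma dim_pos_if_unit:
  "(v :: real vec) \<in> carrier_vec n \<Longrightarrow> v \<bullet> v = 1 \<Longrightarrow> 0 < n"
  by (cases n) (auto simp: scalar_prod_def)

lemma scalar_prod_cauchy_schwarz:
  fixes v w :: "real vec"
  assumes v: "v \<in> carrier_vec n" and w: "w \<in> carrier_vec n"
  shows "(v \<bullet> w)^2 \<le> (v \<bullet> v) * (w \<bullet> w)"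
proof (cases "w \<bullet> w = 0")
  case True
  then have "w = 0\<^sub>v n" using scalar_prod_self_eq_0_iff[OF w] by simp
  then show ?thesis using v by simp
next
  case False
  then have wp: "w \<bullet> w > 0" using scalar_prod_self_nonneg[of w] by simp
  let ?z = "(w \<bullet> w) \<cdot>\<^sub>v v - (v \<bullet> w) \<cdot>\<^sub>v w"
  have "0 \<le> ?z \<bullet> ?z" by (rule scalar_prod_self_nonneg)
  also have "?z \<bullet> ?z = (w \<bullet> w) * ((w \<bullet> w) * (v \<bullet> v) - (v \<bullet> w)^2)"
    using v w by (simp add: minus_scalar_prod_distrib scalar_prod_minus_distrib
        comm_scalar_prod[of w n v] power2_eq_square algebra_simps)
  finally show ?thesis using wp by (simp add: zero_le_mult_iff mult.commute)
qed

lemma scalar_prod_sq_le_if_vnorm_le: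
  fixes g w :: "real vec"
  assumes g: "g \<in> carrier_vec n" and w: "w \<in> carrier_vec n" and ge: "vnorm g \<le> e"
  shows "(g \<bullet> w)^2 \<le> e^2 * (w \<bullet> w)"
proof -
  have "(sqrt (g \<bullet> g))^2 \<le> e^2"
    using ge scalar_prod_self_nonneg[of g] unfolding vnorm_def by (intro power_mono) auto
  then have "g \<bullet> g \<le> e^2" using scalar_prod_self_nonneg[of g] by simp
  then have "(g \<bullet> g) * (w \<bullet> w) \<le> e^2 * (w \<bullet> w)"
    using scalar_prod_self_nonneg[of w] by (rule mult_right_mono)
  with scalar_prod_cauchy_schwarz[OF g w] show ?thesis by linarith
qed

lemma symmetric_scalar_prod_mult:
  fixes M :: "real mat"
  assumes M: "M \<in> carrier_mat n n" and sym: "transpose_mat M = M"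
    and a: "a \<in> carrier_vec n" and b: "b \<in> carrier_vec n"
  shows "(M *\<^sub>v a) \<bullet> b = a \<bullet> (M *\<^sub>v b)"
  using transpose_vec_mult_scalar[OF M b a] sym by simp

lemma scalar_prod_orthogonal_sum:
  fixes v z y :: "real vec"
  assumes v: "v \<in> carrier_vec n" and z: "z \<in> carrier_vec n" and y: "y \<in> carrier_vec n"
    and v1: "v \<bullet> v = 1" and zv: "z \<bullet> v = 0" and yv: "y \<bullet> v = 0"
  shows "(a \<cdot>\<^sub>v v + z) \<bullet> (b \<cdot>\<^sub>v v + y) = a * b + z \<bullet> y"
proof -
  have av: "a \<cdot>\<^sub>v v \<in> carrier_vec n" and bv: "b \<cdot>\<^sub>v v \<in> carrier_vec n" using v by auto
  have vy: "v \<bullet> y = 0" using yv comm_scalar_prod[OF v y] by simp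
  show ?thesis
    using v z y vy zv v1
    by (simp add: add_scalar_prod_distrib[OF av z] scalar_prod_add_distrib[OF av bv y]
        scalar_prod_add_distrib[OF z bv y])
qed

lemma orthogonal_decomposition:
  fixes v w :: "real vec"
  assumes v: "v \<in> carrier_vec n" and v1: "v \<bullet> v = 1" and w: "w \<in> carrier_vec n"
  obtains z where "z \<in> carrier_vec n" and "z \<bullet> v = 0" and "w = (w \<bullet> v) \<cdot>\<^sub>v v + z"
proof
  show "w - (w \<bullet> v) \<cdot>\<^sub>v v \<in> carrier_vec n" using v w by simp
  show "(w - (w \<bullet> v) \<cdot>\<^sub>v v) \<bullet> v = 0" using v w v1 by (simp add: minus_scalar_prod_distrib)
  show "w = (w \<bullet> v) \<cdot>\<^sub>v v + (w - (w \<bullet> v) \<cdot>\<^sub>v v)" using v w by auto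
qed

text \<open>Cauchy--Schwarz against the projection \<open>(x \<bullet> v) x + (u \<bullet> v) u\<close> of \<open>v\<close>.\<close>
lemma bessel_orthonormal_pair:
  fixes x u v :: "real vec"
  assumes x: "x \<in> carrier_vec n" and u: "u \<in> carrier_vec n" and v: "v \<in> carrier_vec n"
    and xx: "x \<bullet> x = 1" and uu: "u \<bullet> u = 1" and ux: "u \<bullet> x = 0"
  shows "(x \<bullet> v)^2 + (u \<bullet> v)^2 \<le> v \<bullet> v"
proof -
  define a b where "a = x \<bullet> v" and "b = u \<bullet> v"
  define p where "p = a \<cdot>\<^sub>v x + b \<cdot>\<^sub>v u"
  have bu: "b \<cdot>\<^sub>v u \<in> carrier_vec n" and bux: "(b \<cdot>\<^sub>v u) \<bullet> x = 0" using u x ux by auto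
  have p: "p \<in> carrier_vec n" using x u by (simp add: p_def)
  have pp: "p \<bullet> p = a^2 + b^2"
    unfolding p_def using scalar_prod_orthogonal_sum[OF x bu bu xx bux bux, of a a] u uu
    by (simp add: power2_eq_square)
  have pv: "p \<bullet> v = a^2 + b^2"
    unfolding p_def using x u v by (simp add: add_scalar_prod_distrib[of _ n] a_def b_def power2_eq_square)
  have "(a^2 + b^2) * (a^2 + b^2) \<le> (a^2 + b^2) * (v \<bullet> v)"
    using scalar_prod_cauchy_schwarz[OF p v] by (simp add: pp pv power2_eq_square)
  moreover have "0 \<le> a^2 + b^2" by simp
  ultimately have "a^2 + b^2 \<le> v \<bullet> v"
    using scalar_prod_self_nonneg[of v]
    by (cases "a^2 + b^2 = 0") (auto simp: mult_le_cancel_left)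
  then show ?thesis unfolding a_def b_def .
qed

lemma mat_of_cols_normalized_orthonormal:
  fixes ws :: "real vec list"
  assumes ws: "set ws \<subseteq> carrier_vec n" "corthogonal ws" "length ws = n"
  defines "W \<equiv> mat_of_cols n (map (\<lambda>w. (1 / sqrt (w \<bullet> w)) \<cdot>\<^sub>v w) ws)"
  shows "W \<in> carrier_mat n n" and "transpose_mat W * W = 1\<^sub>m n"
    and "\<And>i. i < n \<Longrightarrow> col W i = (1 / sqrt (ws ! i \<bullet> ws ! i)) \<cdot>\<^sub>v ws ! i"
proof -
  define us where "us = map (\<lambda>w. (1 / sqrt (w \<bullet> w)) \<cdot>\<^sub>v w) ws"
  have wsc: "i < n \<Longrightarrow> ws ! i \<in> carrier_vec n" for i using ws by auto
  have usc: "i < n \<Longrightarrow> us ! i \<in> carrier_vec n" for i using wsc ws by (simp add: us_def)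
  have orth: "us ! i \<bullet> us ! j = (if i = j then 1 else 0)" if i: "i < n" and j: "j < n" for i j
  proof (cases "i = j")
    case True
    have "ws ! i \<bullet> ws ! i \<noteq> 0" using corthogonalD[OF ws(2), of i i] i ws(3) by simp
    then show ?thesis using True scalar_prod_self_normalize[OF wsc[OF i]] i ws(3) by (simp add: us_def)
  next
    case False
    then have "ws ! i \<bullet> ws ! j = 0" using corthogonalD[OF ws(2), of i j] i j ws(3) by simp
    then show ?thesis using False i j ws wsc[OF i] wsc[OF j] by (simp add: us_def)
  qed
  show W: "W \<in> carrier_mat n n"
    unfolding W_def using mat_of_cols_carrier(1) ws(3) by (metis length_map)
  have colW: "col W i = us ! i" if "i < n" for i
    unfolding W_def us_def[symmetric] using that usc ws(3) by (simp add: us_def)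
  show "col W i = (1 / sqrt (ws ! i \<bullet> ws ! i)) \<cdot>\<^sub>v ws ! i" if "i < n" for i
    using colW[OF that] that ws(3) by (simp add: us_def)
  show "transpose_mat W * W = 1\<^sub>m n"
  proof (rule eq_matI)
    fix i j assume "i < dim_row (1\<^sub>m n)" "j < dim_col (1\<^sub>m n)"
    then have i: "i < n" and j: "j < n" by auto
    show "(transpose_mat W * W) $$ (i, j) = 1\<^sub>m n $$ (i, j)"
      using W i j by (simp add: colW orth)
  qed (use W in auto)
qed

lemma orthogonal_mat_with_first_col:
  fixes v :: "real vec"
  assumes v: "v \<in> carrier_vec n" and v1: "v \<bullet> v = 1"
  obtains W where "W \<in> carrier_mat n n" and "transpose_mat W * W = 1\<^sub>m n"
    and "W * transpose_mat W = 1\<^sub>m n" and "col W 0 = v"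
proof -
  have n: "0 < n" using dim_pos_if_unit[OF v v1] .
  have v0: "v \<noteq> 0\<^sub>v n" using v1 v by auto
  interpret cof_vec_space n "TYPE(real)" .
  define b where "b = basis_completion v"
  from basis_completion[OF v v0, folded b_def]
  have dist_b: "distinct b" and indep: "\<not> lin_dep (set b)" and b: "set b \<subseteq> carrier_vec n"
    and hdb: "hd b = v" and len_b: "length b = n" by auto
  from hdb len_b n obtain vs where bv: "b = v # vs" by (cases b, auto)
  define ws where "ws = gram_schmidt n b"
  from gram_schmidt_result[OF b dist_b indep refl, folded ws_def]
  have ws: "set ws \<subseteq> carrier_vec n" "corthogonal ws" "length ws = n"
    by (auto simp: len_b)
  from gram_schmidt_hd[OF v, of vs, folded bv] have "hd ws = v" unfolding ws_def .
  then have ws0: "ws ! 0 = v" using n ws(3) by (cases ws, auto)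
  define W where "W = mat_of_cols n (map (\<lambda>w. (1 / sqrt (w \<bullet> w)) \<cdot>\<^sub>v w) ws)"
  note W = mat_of_cols_normalized_orthonormal[OF ws, folded W_def]
  show thesis
  proof
    show "W \<in> carrier_mat n n" and "transpose_mat W * W = 1\<^sub>m n" by (fact W(1), fact W(2))
    show "W * transpose_mat W = 1\<^sub>m n"
      by (rule mat_mult_left_right_inverse[OF _ W(1) W(2)]) (use W(1) in auto)
    show "col W 0 = v" using W(3)[OF n] ws0 v1 by simp
  qed
qed

lemma orthogonal_conj_symmetric:
  fixes A W :: "real mat"
  assumes A: "A \<in> carrier_mat n n" and sym: "transpose_mat A = A" and W: "W \<in> carrier_mat n n"
  shows "transpose_mat (transpose_mat W * (A * W)) = transpose_mat W * (A * W)"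
proof -
  have WT: "transpose_mat W \<in> carrier_mat n n" using W by simp
  have "transpose_mat (transpose_mat W * (A * W)) = transpose_mat (A * W) * W"
    using transpose_mult[OF WT, of "A * W" n] A W by simp
  also have "\<dots> = transpose_mat W * A * W" using transpose_mult[OF A W] sym by simp
  also have "\<dots> = transpose_mat W * (A * W)" using WT A W by (simp add: assoc_mult_mat)
  finally show ?thesis .
qed

lemma orthogonal_conj_eigen_block:
  fixes A W :: "real mat"
  assumes A: "A \<in> carrier_mat n n" and sym: "transpose_mat A = A"
    and W: "W \<in> carrier_mat n n" and WW: "transpose_mat W * W = 1\<^sub>m n"
    and colW0: "col W 0 = v" and ev: "A *\<^sub>v v = e \<cdot>\<^sub>v v" and n: "0 < n"
  defines "A' \<equiv> transpose_mat W * (A * W)"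
  shows "A' = four_block_mat (mat 1 1 (\<lambda>_. e)) (0\<^sub>m 1 (n - 1)) (0\<^sub>m (n - 1) 1)
      (mat (n - 1) (n - 1) (\<lambda>(i, j). A' $$ (Suc i, Suc j)))" (is "_ = ?blk")
proof -
  have A': "A' \<in> carrier_mat n n" using A W by (simp add: A'_def)
  have symE: "i < n \<Longrightarrow> j < n \<Longrightarrow> A' $$ (i, j) = A' $$ (j, i)" for i j
    using arg_cong[OF orthogonal_conj_symmetric[OF A sym W, folded A'_def], of "\<lambda>M. M $$ (j, i)"] A'
    by simp
  have v: "v \<in> carrier_vec n" using colW0 W by auto
  have col0: "A' $$ (i, 0) = (if i = 0 then e else 0)" if i: "i < n" for i
  proof -
    have "A' $$ (i, 0) = col W i \<bullet> (A *\<^sub>v col W 0)"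
      unfolding A'_def using W A i n by (simp add: mult_mat_vec_def)
    also have "\<dots> = e * (col W i \<bullet> col W 0)" using ev colW0 W v i by simp
    also have "col W i \<bullet> col W 0 = (if i = 0 then 1 else 0)"
      using arg_cong[OF WW, of "\<lambda>M. M $$ (i, 0)"] W i n by simp
    finally show ?thesis by simp
  qed
  show ?thesis
  proof (rule eq_matI)
    fix i j assume "i < dim_row ?blk" "j < dim_col ?blk"
    then have i: "i < n" and j: "j < n" using n by auto
    consider "j = 0" | "i = 0" | i' j' where "i = Suc i'" "j = Suc j'"
      by (cases i; cases j) auto
    then show "A' $$ (i, j) = ?blk $$ (i, j)"
    proof cases
      case 1
      then show ?thesis using col0[OF i] i n by auto
    next
      case 2
      then show ?thesis using symE[OF i j] col0[OF j] j n by auto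
    next
      case 3
      then show ?thesis using i j by auto
    qed
  qed (use A' n in auto)
qed

lemma orthogonal_conj_quadratic_form:
  fixes A W :: "real mat" and z :: "real vec"
  assumes A: "A \<in> carrier_mat n n" and W: "W \<in> carrier_mat n n"
    and WW: "W * transpose_mat W = 1\<^sub>m n" and z: "z \<in> carrier_vec n"
  shows "z \<bullet> (A *\<^sub>v z) = (transpose_mat W *\<^sub>v z) \<bullet> ((transpose_mat W * (A * W)) *\<^sub>v (transpose_mat W *\<^sub>v z))"
    and "(transpose_mat W *\<^sub>v z) \<bullet> (transpose_mat W *\<^sub>v z) = z \<bullet> z"
proof -
  define t where "t = transpose_mat W *\<^sub>v z"
  have WT: "transpose_mat W \<in> carrier_mat n n" using W by simp
  have t: "t \<in> carrier_vec n" using W unfolding t_def carrier_vec_def by simp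
  have Wt: "W *\<^sub>v t = z" unfolding t_def using W WT z WW by (simp flip: assoc_mult_mat_vec)
  have Az: "A *\<^sub>v z \<in> carrier_vec n" using A z by simp
  have "z \<bullet> (A *\<^sub>v z) = (A *\<^sub>v z) \<bullet> (W *\<^sub>v t)" using Wt comm_scalar_prod[OF z Az] by simp
  also have "\<dots> = (transpose_mat W *\<^sub>v (A *\<^sub>v z)) \<bullet> t"
    using transpose_vec_mult_scalar[OF W t Az] by simp
  also have "transpose_mat W *\<^sub>v (A *\<^sub>v z) = (transpose_mat W * (A * W)) *\<^sub>v t"
    using Wt assoc_mult_mat_vec[OF WT _ t, of "A * W"] assoc_mult_mat_vec[OF A W t] A W by simp
  finally show "z \<bullet> (A *\<^sub>v z) = t \<bullet> ((transpose_mat W * (A * W)) *\<^sub>v t)"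
    using comm_scalar_prod[of t n] t A W by (metis mult_carrier_mat mult_mat_vec_carrier transpose_carrier_mat)
  show "t \<bullet> t = z \<bullet> z"
    using transpose_vec_mult_scalar[OF W t z] Wt unfolding t_def by simp
qed

lemma quadratic_form_four_block_zero_head:
  fixes B :: "real mat" and w :: "real vec"
  assumes B: "B \<in> carrier_mat m m" and w: "w \<in> carrier_vec m"
  defines "t \<equiv> vec 1 (\<lambda>_. 0) @\<^sub>v w"
  shows "t \<bullet> (four_block_mat (mat 1 1 (\<lambda>_. e)) (0\<^sub>m 1 m) (0\<^sub>m m 1) B *\<^sub>v t) = w \<bullet> (B *\<^sub>v w)"
    and "t \<bullet> t = w \<bullet> w"
proof -
  have z1: "(vec 1 (\<lambda>_. 0) :: real vec) \<in> carrier_vec 1" by simp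
  have Bw: "B *\<^sub>v w \<in> carrier_vec m" using B w by simp
  have "four_block_mat (mat 1 1 (\<lambda>_. e)) (0\<^sub>m 1 m) (0\<^sub>m m 1) B *\<^sub>v t
      = (mat 1 1 (\<lambda>_. e) *\<^sub>v vec 1 (\<lambda>_. 0) + 0\<^sub>m 1 m *\<^sub>v w) @\<^sub>v (0\<^sub>m m 1 *\<^sub>v vec 1 (\<lambda>_. 0) + B *\<^sub>v w)"
    unfolding t_def by (rule four_block_mat_mult_vec[OF _ _ _ B z1 w]) auto
  also have "mat 1 1 (\<lambda>_. e) *\<^sub>v vec 1 (\<lambda>_. 0) + 0\<^sub>m 1 m *\<^sub>v w = 0\<^sub>v 1"
    by (rule eq_vecI) (use w in \<open>auto simp: scalar_prod_def\<close>)
  also have "0\<^sub>m m 1 *\<^sub>v vec 1 (\<lambda>_. 0) + B *\<^sub>v w = B *\<^sub>v w"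
    by (rule eq_vecI) (use B w in auto)
  finally show "t \<bullet> (four_block_mat (mat 1 1 (\<lambda>_. e)) (0\<^sub>m 1 m) (0\<^sub>m m 1) B *\<^sub>v t) = w \<bullet> (B *\<^sub>v w)"
    unfolding t_def using scalar_prod_append[OF z1 w zero_carrier_vec Bw]
    by (simp add: scalar_prod_def)
  show "t \<bullet> t = w \<bullet> w"
    unfolding t_def by (subst scalar_prod_append[OF z1 w z1 w]) (simp add: scalar_prod_def)
qed

lemma quadratic_form_orthogonal_complement_block:
  fixes A W B :: "real mat" and v z :: "real vec"
  assumes A: "A \<in> carrier_mat n n" and W: "W \<in> carrier_mat n n" and WW: "W * transpose_mat W = 1\<^sub>m n"
    and colW0: "col W 0 = v" and n: "0 < n" and B: "B \<in> carrier_mat (n - 1) (n - 1)"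
    and blk: "transpose_mat W * (A * W) =
      four_block_mat (mat 1 1 (\<lambda>_. e)) (0\<^sub>m 1 (n - 1)) (0\<^sub>m (n - 1) 1) B"
    and z: "z \<in> carrier_vec n" and zv: "z \<bullet> v = 0"
  obtains w where "w \<in> carrier_vec (n - 1)" and "w \<bullet> w = z \<bullet> z" and "z \<bullet> (A *\<^sub>v z) = w \<bullet> (B *\<^sub>v w)"
proof -
  define t where "t = transpose_mat W *\<^sub>v z"
  define w where "w = vec (n - 1) (\<lambda>i. t $ Suc i)"
  have v: "v \<in> carrier_vec n" using colW0 W by auto
  have "t $ 0 = 0"
    using n W z v colW0 zv comm_scalar_prod[OF v z] unfolding t_def by simp
  then have tw: "t = vec 1 (\<lambda>_. 0) @\<^sub>v w"
    by (intro eq_vecI) (use W n in \<open>auto simp: t_def w_def\<close>)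
  have w: "w \<in> carrier_vec (n - 1)" by (simp add: w_def)
  have "z \<bullet> (A *\<^sub>v z) = w \<bullet> (B *\<^sub>v w)" and "z \<bullet> z = w \<bullet> w"
    using orthogonal_conj_quadratic_form[OF A W WW z, folded t_def]
      quadratic_form_four_block_zero_head[OF B w] unfolding blk tw by simp_all
  with w show thesis by (intro that) simp_all
qed

lemma symmetric_deflation:
  fixes A :: "real mat" and v :: "real vec"
  assumes A: "A \<in> carrier_mat n n" and sym: "transpose_mat A = A"
    and v: "v \<in> carrier_vec n" and v1: "v \<bullet> v = 1" and ev: "A *\<^sub>v v = e \<cdot>\<^sub>v v"
  obtains B where "B \<in> carrier_mat (n - 1) (n - 1)" and "transpose_mat B = B"
    and "char_poly A = [:-e, 1:] * char_poly B"
    and "\<forall>z \<in> carrier_vec n. z \<bullet> v = 0 \<longrightarrow>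
      (\<exists>w \<in> carrier_vec (n - 1). w \<bullet> w = z \<bullet> z \<and> z \<bullet> (A *\<^sub>v z) = w \<bullet> (B *\<^sub>v w))"
proof -
  obtain W where W: "W \<in> carrier_mat n n" and WW: "transpose_mat W * W = 1\<^sub>m n"
    and WW2: "W * transpose_mat W = 1\<^sub>m n" and colW0: "col W 0 = v"
    using orthogonal_mat_with_first_col[OF v v1] .
  have n: "0 < n" using dim_pos_if_unit[OF v v1] .
  define A' where "A' = transpose_mat W * (A * W)"
  define B where "B = mat (n - 1) (n - 1) (\<lambda>(i, j). A' $$ (Suc i, Suc j))"
  have B: "B \<in> carrier_mat (n - 1) (n - 1)" by (simp add: B_def)
  have blk: "A' = four_block_mat (mat 1 1 (\<lambda>_. e)) (0\<^sub>m 1 (n - 1)) (0\<^sub>m (n - 1) 1) B"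
    using orthogonal_conj_eigen_block[OF A sym W WW colW0 ev n] unfolding A'_def B_def .
  show thesis
  proof
    show "B \<in> carrier_mat (n - 1) (n - 1)" by (fact B)
    show "transpose_mat B = B"
    proof (rule eq_matI)
      fix i j assume "i < dim_row B" "j < dim_col B"
      then show "transpose_mat B $$ (i, j) = B $$ (i, j)"
        using arg_cong[OF orthogonal_conj_symmetric[OF A sym W], of "\<lambda>M. M $$ (Suc j, Suc i)"] A W
        by (auto simp: B_def A'_def)
    qed (use B in auto)
    have "similar_mat A' A"
      unfolding similar_mat_def
      by (rule exI[of _ "transpose_mat W"], rule exI[of _ W], rule similar_mat_witI[of _ _ n])
        (use WW WW2 A W in \<open>auto simp: A'_def assoc_mult_mat\<close>)
    then have "char_poly A = char_poly A'" by (simp add: char_poly_similar)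
    also have "\<dots> = char_poly (mat 1 1 (\<lambda>_. e)) * char_poly B"
      unfolding blk by (rule char_poly_four_block_zeros_col[OF _ _ B]) auto
    also have "char_poly (mat 1 1 (\<lambda>_. e)) = [:-e, 1:]"
      by (simp add: char_poly_defs det_def sign_def)
    finally show "char_poly A = [:-e, 1:] * char_poly B" .
    show "\<forall>z \<in> carrier_vec n. z \<bullet> v = 0 \<longrightarrow>
      (\<exists>w \<in> carrier_vec (n - 1). w \<bullet> w = z \<bullet> z \<and> z \<bullet> (A *\<^sub>v z) = w \<bullet> (B *\<^sub>v w))"
    proof (intro ballI impI)
      fix z assume "z \<in> carrier_vec n" and "z \<bullet> v = 0"
      then obtain w where "w \<in> carrier_vec (n - 1)" and "w \<bullet> w = z \<bullet> z"
        and "z \<bullet> (A *\<^sub>v z) = w \<bullet> (B *\<^sub>v w)"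
        by (rule quadratic_form_orthogonal_complement_block[OF A W WW2 colW0 n B blk[unfolded A'_def]])
      then show "\<exists>w \<in> carrier_vec (n - 1). w \<bullet> w = z \<bullet> z \<and> z \<bullet> (A *\<^sub>v z) = w \<bullet> (B *\<^sub>v w)"
        by blast
    qed
  qed
qed

lemma unit_eigenvector_exists:
  fixes A :: "real mat"
  assumes A: "A \<in> carrier_mat n n" and root: "poly (char_poly A) e = 0"
  obtains v where "v \<in> carrier_vec n" and "v \<bullet> v = 1" and "A *\<^sub>v v = e \<cdot>\<^sub>v v"
proof -
  have "eigenvalue A e" using eigenvalue_root_char_poly[OF A] root by simp
  then obtain u where "eigenvector A u e" unfolding eigenvalue_def by blast
  then have u: "u \<in> carrier_vec n" and u0: "u \<noteq> 0\<^sub>v n" and Au: "A *\<^sub>v u = e \<cdot>\<^sub>v u"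
    unfolding eigenvector_def using A by auto
  have uu: "u \<bullet> u \<noteq> 0" using scalar_prod_self_eq_0_iff[OF u] u0 by simp
  show thesis
  proof
    show "(1 / sqrt (u \<bullet> u)) \<cdot>\<^sub>v u \<in> carrier_vec n" using u by simp
    show "((1 / sqrt (u \<bullet> u)) \<cdot>\<^sub>v u) \<bullet> ((1 / sqrt (u \<bullet> u)) \<cdot>\<^sub>v u) = 1"
      by (rule scalar_prod_self_normalize[OF u uu])
    show "A *\<^sub>v ((1 / sqrt (u \<bullet> u)) \<cdot>\<^sub>v u) = e \<cdot>\<^sub>v ((1 / sqrt (u \<bullet> u)) \<cdot>\<^sub>v u)"
      using A u Au by (simp add: mult_mat_vec smult_smult_assoc mult.commute)
  qed
qed

lemma quadratic_form_orthogonal_sum: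
  fixes A :: "real mat" and v z :: "real vec"
  assumes A: "A \<in> carrier_mat n n" and sym: "transpose_mat A = A"
    and v: "v \<in> carrier_vec n" and v1: "v \<bullet> v = 1" and ev: "A *\<^sub>v v = e \<cdot>\<^sub>v v"
    and z: "z \<in> carrier_vec n" and zv: "z \<bullet> v = 0"
  shows "(a \<cdot>\<^sub>v v + z) \<bullet> (A *\<^sub>v (a \<cdot>\<^sub>v v + z)) = a^2 * e + z \<bullet> (A *\<^sub>v z)"
proof -
  have Az: "A *\<^sub>v z \<in> carrier_vec n" using A z by simp
  have Azv: "(A *\<^sub>v z) \<bullet> v = 0"
    using symmetric_scalar_prod_mult[OF A sym z v] ev zv z v by simp
  have "A *\<^sub>v (a \<cdot>\<^sub>v v + z) = (a * e) \<cdot>\<^sub>v v + A *\<^sub>v z"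
    using A v z ev by (simp add: mult_add_distrib_mat_vec[OF A _ z] mult_mat_vec smult_smult_assoc)
  then show ?thesis
    using scalar_prod_orthogonal_sum[OF v z Az v1 zv Azv, of a "a * e"]
    by (simp add: power2_eq_square)
qed

lemma quadratic_form_le_if_eigenvalues_le:
  fixes A :: "real mat" and y :: "real vec"
  assumes "A \<in> carrier_mat n n" and "transpose_mat A = A"
    and "char_poly A = (\<Prod>e\<leftarrow>es. [:-e, 1:])" and "\<forall>e\<in>set es. e \<le> c"
    and "y \<in> carrier_vec n"
  shows "y \<bullet> (A *\<^sub>v y) \<le> c * (y \<bullet> y)"
  using assms
proof (induction es arbitrary: n A y)
  case Nil
  then have "n = 0" using degree_monic_char_poly[of A n] by simp
  then show ?case using Nil.prems(5) by (simp add: scalar_prod_def)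
next
  case (Cons e es)
  note A = Cons.prems(1) and sym = Cons.prems(2) and y = Cons.prems(5)
  have "poly (char_poly A) e = 0" using Cons.prems(3) by simp
  then obtain v where v: "v \<in> carrier_vec n" and v1: "v \<bullet> v = 1" and ev: "A *\<^sub>v v = e \<cdot>\<^sub>v v"
    by (rule unit_eigenvector_exists[OF A])
  obtain B where B: "B \<in> carrier_mat (n - 1) (n - 1)" and symB: "transpose_mat B = B"
    and cpB: "char_poly A = [:-e, 1:] * char_poly B"
    and red: "\<forall>z \<in> carrier_vec n. z \<bullet> v = 0 \<longrightarrow>
      (\<exists>w \<in> carrier_vec (n - 1). w \<bullet> w = z \<bullet> z \<and> z \<bullet> (A *\<^sub>v z) = w \<bullet> (B *\<^sub>v w))"
    by (rule symmetric_deflation[OF A sym v v1 ev])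
  have "[:-e, 1:] * char_poly B = [:-e, 1:] * (\<Prod>e\<leftarrow>es. [:-e, 1:])"
    using Cons.prems(3) unfolding cpB list.map prod_list.Cons .
  then have "char_poly B = (\<Prod>e\<leftarrow>es. [:-e, 1:])"
    by (rule mult_left_cancel[THEN iffD1, rotated]) simp
  then have IH: "w \<bullet> (B *\<^sub>v w) \<le> c * (w \<bullet> w)" if "w \<in> carrier_vec (n - 1)" for w
    using Cons.IH[OF B symB _ _ that] Cons.prems(4) by simp
  obtain z where z: "z \<in> carrier_vec n" and zv: "z \<bullet> v = 0" and yz: "y = (y \<bullet> v) \<cdot>\<^sub>v v + z"
    by (rule orthogonal_decomposition[OF v v1 y])
  from red z zv obtain w where "w \<in> carrier_vec (n - 1)" and "w \<bullet> w = z \<bullet> z"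
    and "z \<bullet> (A *\<^sub>v z) = w \<bullet> (B *\<^sub>v w)" by blast
  then have zb: "z \<bullet> (A *\<^sub>v z) \<le> c * (z \<bullet> z)" using IH by metis
  have "(y \<bullet> v)^2 * e \<le> (y \<bullet> v)^2 * c" using Cons.prems(4) by (simp add: mult_left_mono)
  then show ?case
    using zb yz quadratic_form_orthogonal_sum[OF A sym v v1 ev z zv, of "y \<bullet> v"]
      scalar_prod_orthogonal_sum[OF v z z v1 zv zv, of "y \<bullet> v" "y \<bullet> v"]
    by (simp add: power2_eq_square algebra_simps)
qed

lemma top_eigenvector_exists:
  fixes A :: "real mat"
  assumes A: "A \<in> carrier_mat n n" and sym: "transpose_mat A = A"
    and cp: "char_poly A = [:-l, 1:] * (\<Prod>e\<leftarrow>es. [:-e, 1:])" and les: "\<forall>e\<in>set es. e \<le> c"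
  obtains v where "v \<in> carrier_vec n" and "v \<bullet> v = 1" and "A *\<^sub>v v = l \<cdot>\<^sub>v v"
    and "\<And>z. z \<in> carrier_vec n \<Longrightarrow> z \<bullet> v = 0 \<Longrightarrow> z \<bullet> (A *\<^sub>v z) \<le> c * (z \<bullet> z)"
proof -
  have "poly (char_poly A) l = 0" unfolding cp by simp
  then obtain v where v: "v \<in> carrier_vec n" and v1: "v \<bullet> v = 1" and ev: "A *\<^sub>v v = l \<cdot>\<^sub>v v"
    by (rule unit_eigenvector_exists[OF A])
  obtain B where B: "B \<in> carrier_mat (n - 1) (n - 1)" and symB: "transpose_mat B = B"
    and cpB: "char_poly A = [:-l, 1:] * char_poly B"
    and red: "\<forall>z \<in> carrier_vec n. z \<bullet> v = 0 \<longrightarrow>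
      (\<exists>w \<in> carrier_vec (n - 1). w \<bullet> w = z \<bullet> z \<and> z \<bullet> (A *\<^sub>v z) = w \<bullet> (B *\<^sub>v w))"
    by (rule symmetric_deflation[OF A sym v v1 ev])
  have "[:-l, 1:] * char_poly B = [:-l, 1:] * (\<Prod>e\<leftarrow>es. [:-e, 1:])"
    using cp unfolding cpB .
  then have "char_poly B = (\<Prod>e\<leftarrow>es. [:-e, 1:])"
    by (rule mult_left_cancel[THEN iffD1, rotated]) simp
  then have bound: "w \<bullet> (B *\<^sub>v w) \<le> c * (w \<bullet> w)" if "w \<in> carrier_vec (n - 1)" for w
    using quadratic_form_le_if_eigenvalues_le[OF B symB _ les that] by simp
  show thesis
  proof (rule that[OF v v1 ev])
    fix z assume "z \<in> carrier_vec n" and "z \<bullet> v = 0"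
    with red obtain w where "w \<in> carrier_vec (n - 1)" and "w \<bullet> w = z \<bullet> z"
      and "z \<bullet> (A *\<^sub>v z) = w \<bullet> (B *\<^sub>v w)" by blast
    then show "z \<bullet> (A *\<^sub>v z) \<le> c * (z \<bullet> z)" using bound by metis
  qed
qed

lemma prod_lessThan_linear_factors_split:
  fixes lam :: "nat \<Rightarrow> real"
  assumes "1 \<le> N"
  shows "(\<Prod>i<N. [:- lam i, 1:]) = [:- lam 0, 1:] * (\<Prod>e\<leftarrow>map lam [1..<N]. [:- e, 1:])"
proof -
  have "(\<Prod>i<N. [:- lam i, 1:]) = [:- lam 0, 1:] * (\<Prod>i\<in>{1..<N}. [:- lam i, 1:])"
    using assms by (simp add: lessThan_atLeast0 prod.atLeast_Suc_lessThan)
  also have "(\<Prod>i\<in>{1..<N}. [:- lam i, 1:]) = (\<Prod>i\<leftarrow>[1..<N]. [:- lam i, 1:])"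
    by (subst prod.distinct_set_conv_list[symmetric]) auto
  also have "\<dots> = (\<Prod>e\<leftarrow>map lam [1..<N]. [:- e, 1:])" by (simp add: o_def)
  finally show ?thesis .
qed

lemma exists_unit_orthogonal_vec:
  fixes x :: "real vec"
  assumes N: "2 \<le> N" and x: "x \<in> carrier_vec N"
  obtains u where "u \<in> carrier_vec N" and "x \<bullet> u = 0" and "u \<bullet> u = 1"
proof (cases "x $ 0 = 0 \<and> x $ 1 = 0")
  case True
  show thesis
    by (rule that[of "unit_vec N 0"]) (use True N in auto)
next
  case False
  define p where "p = x $ 1 \<cdot>\<^sub>v unit_vec N 0 - x $ 0 \<cdot>\<^sub>v unit_vec N 1"
  have p: "p \<in> carrier_vec N" unfolding p_def by simp
  have xp: "x \<bullet> p = 0" unfolding p_def using N x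
    by (simp add: scalar_prod_minus_distrib[of _ N] mult.commute)
  have "p $ 0 = x $ 1" "p $ 1 = - x $ 0" unfolding p_def using N by auto
  then have "p \<noteq> 0\<^sub>v N" using False N by auto
  then have pp: "p \<bullet> p \<noteq> 0" using scalar_prod_self_eq_0_iff[OF p] by simp
  show thesis
  proof (rule that)
    show "(1 / sqrt (p \<bullet> p)) \<cdot>\<^sub>v p \<in> carrier_vec N" using p by simp
    show "x \<bullet> ((1 / sqrt (p \<bullet> p)) \<cdot>\<^sub>v p) = 0" using xp x p by simp
    show "((1 / sqrt (p \<bullet> p)) \<cdot>\<^sub>v p) \<bullet> ((1 / sqrt (p \<bullet> p)) \<cdot>\<^sub>v p) = 1"
      by (rule scalar_prod_self_normalize[OF p pp])
  qed
qed

lemma outer_vec_carrier: "x \<in> carrier_vec n \<Longrightarrow> outer_vec x \<in> carrier_mat n n"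
  by (simp add: outer_vec_def)

lemma outer_vec_mult_vec:
  fixes x w :: "real vec"
  assumes x: "x \<in> carrier_vec n" and w: "w \<in> carrier_vec n"
  shows "outer_vec x *\<^sub>v w = (x \<bullet> w) \<cdot>\<^sub>v x"
proof (rule eq_vecI)
  fix i assume "i < dim_vec ((x \<bullet> w) \<cdot>\<^sub>v x)"
  then have i: "i < n" using x by simp
  have "(outer_vec x *\<^sub>v w) $ i = (\<Sum>j<n. x $ i * x $ j * w $ j)"
    using x w i by (simp add: outer_vec_def scalar_prod_def row_def lessThan_atLeast0)
  also have "\<dots> = x $ i * (\<Sum>j<n. x $ j * w $ j)" by (simp add: sum_distrib_left mult.assoc)
  also have "\<dots> = ((x \<bullet> w) \<cdot>\<^sub>v x) $ i" using x w i by (simp add: scalar_prod_def lessThan_atLeast0)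
  finally show "(outer_vec x *\<^sub>v w) $ i = ((x \<bullet> w) \<cdot>\<^sub>v x) $ i" .
qed (use x in \<open>simp add: outer_vec_def\<close>)

lemma tangent_projection_mult_vec:
  fixes x w :: "real vec"
  assumes x: "x \<in> carrier_vec n" and w: "w \<in> carrier_vec n"
  shows "(1\<^sub>m n - outer_vec x) *\<^sub>v w = w - (x \<bullet> w) \<cdot>\<^sub>v x"
  using minus_mult_distrib_mat_vec[OF one_carrier_mat outer_vec_carrier[OF x] w]
    outer_vec_mult_vec[OF x w] w
  by simp

lemma sphere_grad_eq:
  fixes M :: "real mat" and x :: "real vec"
  assumes M: "M \<in> carrier_mat n n" and x: "x \<in> carrier_vec n"
  shows "sphere_grad M x = (x \<bullet> (M *\<^sub>v x)) \<cdot>\<^sub>v x - M *\<^sub>v x"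
proof -
  have Mx: "M *\<^sub>v x \<in> carrier_vec n" using M x by simp
  have "sphere_grad M x = outer_vec x *\<^sub>v (M *\<^sub>v x) - 1\<^sub>m n *\<^sub>v (M *\<^sub>v x)"
    unfolding sphere_grad_def
    using x minus_mult_distrib_mat_vec[OF outer_vec_carrier[OF x] one_carrier_mat Mx] by simp
  then show ?thesis using outer_vec_mult_vec[OF x Mx] Mx by simp
qed

lemma sphere_hess_quadratic_form:
  fixes M :: "real mat" and x u :: "real vec"
  assumes M: "M \<in> carrier_mat n n" and x: "x \<in> carrier_vec n" and u: "u \<in> carrier_vec n"
    and xu: "x \<bullet> u = 0"
  shows "u \<bullet> (sphere_hess M x *\<^sub>v u) = (x \<bullet> (M *\<^sub>v x)) * (u \<bullet> u) - u \<bullet> (M *\<^sub>v u)"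
proof -
  define r where "r = x \<bullet> (M *\<^sub>v x)"
  define P where "P = 1\<^sub>m n - outer_vec x"
  define B where "B = r \<cdot>\<^sub>m 1\<^sub>m n - M"
  have P: "P \<in> carrier_mat n n" unfolding P_def using outer_vec_carrier[OF x] by (rule minus_carrier_mat)
  have B: "B \<in> carrier_mat n n" unfolding B_def using M by (rule minus_carrier_mat)
  have Pu: "P *\<^sub>v u = u"
    unfolding P_def using tangent_projection_mult_vec[OF x u] xu u x by auto
  have "(r \<cdot>\<^sub>m 1\<^sub>m n) *\<^sub>v u = r \<cdot>\<^sub>v u"
  proof (rule eq_vecI)
    fix i assume "i < dim_vec (r \<cdot>\<^sub>v u)"
    then have i: "i < n" using u by simp
    have "row (r \<cdot>\<^sub>m 1\<^sub>m n) i = r \<cdot>\<^sub>v unit_vec n i" by (rule eq_vecI) (use i in auto)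
    then show "((r \<cdot>\<^sub>m 1\<^sub>m n) *\<^sub>v u) $ i = (r \<cdot>\<^sub>v u) $ i" using i u by simp
  qed (use u in simp)
  then have Bu: "B *\<^sub>v u = r \<cdot>\<^sub>v u - M *\<^sub>v u" unfolding B_def
    using minus_mult_distrib_mat_vec[of "r \<cdot>\<^sub>m 1\<^sub>m n" n n M u] M u by simp
  have Buc: "B *\<^sub>v u \<in> carrier_vec n" using B u by simp
  have "sphere_hess M x = P * B * P"
    using x unfolding sphere_hess_def P_def B_def r_def Let_def by simp
  then have "sphere_hess M x *\<^sub>v u = P *\<^sub>v (B *\<^sub>v (P *\<^sub>v u))"
    using assoc_mult_mat_vec[OF P B u] assoc_mult_mat_vec[OF mult_carrier_mat[OF P B] P u]
      P B u by simp
  also have "\<dots> = B *\<^sub>v u - (x \<bullet> (B *\<^sub>v u)) \<cdot>\<^sub>v x"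
    using Pu tangent_projection_mult_vec[OF x Buc] unfolding P_def by simp
  finally have "u \<bullet> (sphere_hess M x *\<^sub>v u) = u \<bullet> (B *\<^sub>v u) - (x \<bullet> (B *\<^sub>v u)) * (u \<bullet> x)"
    using u x Buc by (simp add: scalar_prod_minus_distrib)
  also have "u \<bullet> x = 0" using xu comm_scalar_prod[OF x u] by simp
  finally show ?thesis
    unfolding Bu r_def[symmetric] using u M by (simp add: scalar_prod_minus_distrib)
qed

lemma le_of_linear_and_quadratic_bounds:
  fixes d s p :: real
  assumes d: "0 < d" and s: "0 \<le> s" and lower: "d / 2 * s \<le> p" and upper: "p^2 \<le> (0.2 * d)^2 * s"
  shows "s \<le> 0.16"
proof (cases "s = 0")
  case False
  have "(d / 2 * s)^2 \<le> p^2" using lower d s by (intro power_mono) auto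
  with upper have "(d / 2 * s)^2 \<le> (0.2 * d)^2 * s" by linarith
  then have "(d^2 * s) * s \<le> (d^2 * s) * 0.16"
    by (simp add: power2_eq_square algebra_simps)
  moreover have "0 < d^2 * s" using d s False by simp
  ultimately show ?thesis by (rule mult_left_le_imp_le)
qed simp

lemma lambda_min_hess_ge:
  fixes M :: "real mat" and x :: "real vec"
  assumes x: "x \<in> carrier_vec n"
    and u0: "u0 \<in> carrier_vec n" "x \<bullet> u0 = 0" "u0 \<bullet> u0 = 1"
    and lower: "\<And>u. u \<in> carrier_vec n \<Longrightarrow> x \<bullet> u = 0 \<Longrightarrow> u \<bullet> u = 1 \<Longrightarrow>
      b \<le> u \<bullet> (sphere_hess M x *\<^sub>v u)"
  shows "b \<le> lambda_min_hess M x"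
  unfolding lambda_min_hess_def using x u0 lower by (intro cInf_greatest) auto

lemma lambda_min_hess_le:
  fixes M :: "real mat" and x :: "real vec"
  assumes x: "x \<in> carrier_vec n"
    and lower: "\<And>u. u \<in> carrier_vec n \<Longrightarrow> x \<bullet> u = 0 \<Longrightarrow> u \<bullet> u = 1 \<Longrightarrow>
      a \<le> u \<bullet> (sphere_hess M x *\<^sub>v u)"
    and u: "u \<in> carrier_vec n" "x \<bullet> u = 0" "u \<bullet> u = 1"
    and le: "u \<bullet> (sphere_hess M x *\<^sub>v u) \<le> b"
  shows "lambda_min_hess M x \<le> b"
  unfolding lambda_min_hess_def
proof (rule cInf_lower2)
  show "u \<bullet> (sphere_hess M x *\<^sub>v u) \<le> b" by (fact le)
  show "u \<bullet> (sphere_hess M x *\<^sub>v u) \<in> {u \<bullet> (sphere_hess M x *\<^sub>v u) |u.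
    u \<in> carrier_vec (dim_vec x) \<and> x \<bullet> u = 0 \<and> u \<bullet> u = 1}" using x u by auto
  show "bdd_below {u \<bullet> (sphere_hess M x *\<^sub>v u) |u.
    u \<in> carrier_vec (dim_vec x) \<and> x \<bullet> u = 0 \<and> u \<bullet> u = 1}"
    using x lower by (auto intro!: bdd_belowI[of _ a])
qed

locale spectral_gap =
  fixes M :: "real mat" and n :: nat and v :: "real vec" and l1 l2 :: real
  assumes M: "M \<in> carrier_mat n n" and sym: "transpose_mat M = M"
    and v: "v \<in> carrier_vec n" and v_unit: "v \<bullet> v = 1" and eigen: "M *\<^sub>v v = l1 \<cdot>\<^sub>v v"
    and complement_bound: "\<And>z. z \<in> carrier_vec n \<Longrightarrow> z \<bullet> v = 0 \<Longrightarrow> z \<bullet> (M *\<^sub>v z) \<le> l2 * (z \<bullet> z)"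
    and gap: "l2 < l1"
begin

lemma mult_vec_scalar_prod_eigen: "w \<in> carrier_vec n \<Longrightarrow> (M *\<^sub>v w) \<bullet> v = l1 * (w \<bullet> v)"
  using symmetric_scalar_prod_mult[OF M sym _ v] eigen v by simp

lemma rayleigh_le:
  assumes u: "u \<in> carrier_vec n" and uu: "u \<bullet> u = 1"
  shows "u \<bullet> (M *\<^sub>v u) \<le> l2 + (l1 - l2) * (u \<bullet> v)^2"
proof -
  define a where "a = u \<bullet> v"
  obtain z where z: "z \<in> carrier_vec n" and zv: "z \<bullet> v = 0" and uz: "u = a \<cdot>\<^sub>v v + z"
    using orthogonal_decomposition[OF v v_unit u, folded a_def] .
  have uMu: "u \<bullet> (M *\<^sub>v u) = a^2 * l1 + z \<bullet> (M *\<^sub>v z)"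
    unfolding uz by (rule quadratic_form_orthogonal_sum[OF M sym v v_unit eigen z zv])
  have "1 = a^2 + z \<bullet> z"
    using scalar_prod_orthogonal_sum[OF v z z v_unit zv zv, of a a] uu
    unfolding uz by (simp add: power2_eq_square)
  then have "z \<bullet> z = 1 - a^2" by simp
  then have "z \<bullet> (M *\<^sub>v z) \<le> l2 * (1 - a^2)" using complement_bound[OF z zv] by simp
  then show ?thesis unfolding uMu a_def[symmetric] by (simp add: algebra_simps)
qed

lemma rayleigh_le_top:
  assumes u: "u \<in> carrier_vec n" and uu: "u \<bullet> u = 1"
  shows "u \<bullet> (M *\<^sub>v u) \<le> l1"
proof -
  have "(u \<bullet> v)^2 \<le> 1" using scalar_prod_cauchy_schwarz[OF u v] uu v_unit by simp
  then have "(l1 - l2) * (u \<bullet> v)^2 \<le> l1 - l2" using gap by (simp add: mult_left_le)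
  then show ?thesis using rayleigh_le[OF u uu] by simp
qed

lemma hess_form_ge_rayleigh_minus_top:
  assumes x: "x \<in> carrier_vec n" and u: "u \<in> carrier_vec n" and xu: "x \<bullet> u = 0" and uu: "u \<bullet> u = 1"
  shows "x \<bullet> (M *\<^sub>v x) - l1 \<le> u \<bullet> (sphere_hess M x *\<^sub>v u)"
  using sphere_hess_quadratic_form[OF M x u xu] rayleigh_le_top[OF u uu] uu by simp

lemma top_component_large:
  assumes x: "x \<in> carrier_vec n" and xx: "x \<bullet> x = 1"
    and grad: "vnorm (sphere_grad M x) \<le> 0.2 * (l1 - l2)"
    and high: "l2 + (l1 - l2) / 2 \<le> x \<bullet> (M *\<^sub>v x)"
  shows "1 - (x \<bullet> v)^2 \<le> 0.16"
proof -
  define c where "c = x \<bullet> v"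
  define g where "g = sphere_grad M x"
  obtain y where y: "y \<in> carrier_vec n" and yv: "y \<bullet> v = 0" and xy: "x = c \<cdot>\<^sub>v v + y"
    using orthogonal_decomposition[OF v v_unit x, folded c_def] .
  have My: "M *\<^sub>v y \<in> carrier_vec n" using M y by simp
  have g: "g \<in> carrier_vec n" using M x by (simp add: g_def sphere_grad_eq[OF M x])
  have yy: "y \<bullet> y = 1 - c^2"
    using scalar_prod_orthogonal_sum[OF v y y v_unit yv yv, of c c] xx
    unfolding xy by (simp add: power2_eq_square)
  have vy: "v \<bullet> y = 0" and vMy: "v \<bullet> (M *\<^sub>v y) = 0"
    using yv comm_scalar_prod[OF v y] mult_vec_scalar_prod_eigen[OF y] comm_scalar_prod[OF v My]
    by simp_all
  have xy_y: "x \<bullet> y = y \<bullet> y" and xMy: "x \<bullet> (M *\<^sub>v y) = y \<bullet> (M *\<^sub>v y)"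
    unfolding xy using add_scalar_prod_distrib[of "c \<cdot>\<^sub>v v" n y] v y My vy vMy by simp_all
  have gy: "g \<bullet> y = (x \<bullet> (M *\<^sub>v x)) * (y \<bullet> y) - y \<bullet> (M *\<^sub>v y)"
    unfolding g_def sphere_grad_eq[OF M x]
    using minus_scalar_prod_distrib[of _ n "M *\<^sub>v x" y] M x y xy_y xMy
      symmetric_scalar_prod_mult[OF M sym x y]
    by simp
  have "(l1 - l2) / 2 \<le> x \<bullet> (M *\<^sub>v x) - l2" using high by linarith
  then have "(l1 - l2) / 2 * (y \<bullet> y) \<le> (x \<bullet> (M *\<^sub>v x) - l2) * (y \<bullet> y)"
    using scalar_prod_self_nonneg[of y] by (rule mult_right_mono)
  with gy have "(l1 - l2) / 2 * (y \<bullet> y) \<le> g \<bullet> y"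
    using complement_bound[OF y yv] by (simp add: left_diff_distrib)
  with scalar_prod_sq_le_if_vnorm_le[OF g y grad[folded g_def]] gap have "y \<bullet> y \<le> 0.16"
    by (intro le_of_linear_and_quadratic_bounds[of "l1 - l2"]) (auto simp: scalar_prod_self_nonneg)
  then show ?thesis using yy c_def by simp
qed

lemma hess_form_ge_if_rayleigh_high:
  assumes x: "x \<in> carrier_vec n" and xx: "x \<bullet> x = 1"
    and grad: "vnorm (sphere_grad M x) \<le> 0.2 * (l1 - l2)"
    and high: "l2 + (l1 - l2) / 2 \<le> x \<bullet> (M *\<^sub>v x)"
    and u: "u \<in> carrier_vec n" and xu: "x \<bullet> u = 0" and uu: "u \<bullet> u = 1"
  shows "0.3 * (l1 - l2) \<le> u \<bullet> (sphere_hess M x *\<^sub>v u)"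
proof -
  have "(x \<bullet> v)^2 + (u \<bullet> v)^2 \<le> 1"
    using bessel_orthonormal_pair[OF x u v xx uu] xu comm_scalar_prod[OF x u] v_unit by simp
  then have "(u \<bullet> v)^2 \<le> 0.16" using top_component_large[OF x xx grad high] by simp
  then have "(l1 - l2) * (u \<bullet> v)^2 \<le> (l1 - l2) * 0.16" using gap by (intro mult_left_mono) auto
  then have "u \<bullet> (M *\<^sub>v u) \<le> l2 + (l1 - l2) * 0.16" using rayleigh_le[OF u uu] by linarith
  moreover have "u \<bullet> (sphere_hess M x *\<^sub>v u) = x \<bullet> (M *\<^sub>v x) - u \<bullet> (M *\<^sub>v u)"
    using sphere_hess_quadratic_form[OF M x u xu] uu by simp
  moreover have "0.3 * (l1 - l2) \<le> x \<bullet> (M *\<^sub>v x) - (l2 + (l1 - l2) * 0.16)"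
    using high gap by (simp add: field_simps)
  ultimately show ?thesis by linarith
qed

lemma top_component_small:
  assumes x: "x \<in> carrier_vec n"
    and grad: "vnorm (sphere_grad M x) \<le> 0.2 * (l1 - l2)"
    and low: "x \<bullet> (M *\<^sub>v x) < l2 + (l1 - l2) / 2"
  shows "(x \<bullet> v)^2 \<le> 0.16"
proof -
  define c where "c = x \<bullet> v"
  define D where "D = l1 - x \<bullet> (M *\<^sub>v x)"
  have g: "sphere_grad M x \<in> carrier_vec n" using M x by (simp add: sphere_grad_eq[OF M x])
  have "sphere_grad M x \<bullet> v = - (c * D)"
    unfolding sphere_grad_eq[OF M x] c_def D_def
    using minus_scalar_prod_distrib[of _ n "M *\<^sub>v x" v] M x v mult_vec_scalar_prod_eigen[OF x]
    by (simp add: algebra_simps)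
  then have cD: "(c * D)^2 \<le> (0.2 * (l1 - l2))^2"
    using scalar_prod_sq_le_if_vnorm_le[OF g v grad] v_unit by simp
  have "(l1 - l2) / 2 \<le> D" using low unfolding D_def by argo
  then have "((l1 - l2) / 2)^2 * c^2 \<le> D^2 * c^2"
    using gap by (intro mult_right_mono power_mono) auto
  with cD have "(l1 - l2)^2 * c^2 \<le> (l1 - l2)^2 * 0.16"
    by (simp add: power2_eq_square algebra_simps)
  then show ?thesis using gap unfolding c_def by simp
qed

lemma tangent_part_of_top_eigenvector:
  assumes x: "x \<in> carrier_vec n" and xx: "x \<bullet> x = 1"
  defines "w \<equiv> v - (x \<bullet> v) \<cdot>\<^sub>v x"
  shows "w \<in> carrier_vec n" and "x \<bullet> w = 0" and "w \<bullet> w = 1 - (x \<bullet> v)^2"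
    and "w \<bullet> (M *\<^sub>v w) = l1 - 2 * (x \<bullet> v)^2 * l1 + (x \<bullet> v)^2 * (x \<bullet> (M *\<^sub>v x))"
proof -
  define c where "c = x \<bullet> v"
  have cx: "c \<cdot>\<^sub>v x \<in> carrier_vec n" and Mx: "M *\<^sub>v x \<in> carrier_vec n" using x M by auto
  show w: "w \<in> carrier_vec n" using v x by (simp add: w_def)
  have vx: "v \<bullet> x = c" using comm_scalar_prod[OF v x] c_def by simp
  show "x \<bullet> w = 0"
    unfolding w_def using scalar_prod_minus_distrib[OF x v cx] x v xx c_def by simp
  show "w \<bullet> w = 1 - (x \<bullet> v)^2"
    unfolding w_def c_def[symmetric]
    using minus_scalar_prod_distrib[OF v cx w[unfolded w_def c_def[symmetric]]]
      scalar_prod_minus_distrib[OF v v cx] scalar_prod_minus_distrib[OF cx v cx] v x v_unit xx vx c_def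
    by (simp add: power2_eq_square)
  have Mw: "M *\<^sub>v w = l1 \<cdot>\<^sub>v v - c \<cdot>\<^sub>v (M *\<^sub>v x)"
    unfolding w_def c_def[symmetric] using mult_minus_distrib_mat_vec[OF M v cx] mult_mat_vec[OF M x] eigen
    by simp
  have lv: "l1 \<cdot>\<^sub>v v \<in> carrier_vec n" and cMx: "c \<cdot>\<^sub>v (M *\<^sub>v x) \<in> carrier_vec n" using v Mx by auto
  have vMx: "v \<bullet> (M *\<^sub>v x) = l1 * c"
    using mult_vec_scalar_prod_eigen[OF x] comm_scalar_prod[OF v Mx] c_def by simp
  show "w \<bullet> (M *\<^sub>v w) = l1 - 2 * (x \<bullet> v)^2 * l1 + (x \<bullet> v)^2 * (x \<bullet> (M *\<^sub>v x))"
    unfolding Mw unfolding w_def c_def[symmetric]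
    using minus_scalar_prod_distrib[OF v cx, of "l1 \<cdot>\<^sub>v v - c \<cdot>\<^sub>v (M *\<^sub>v x)"]
      scalar_prod_minus_distrib[OF v lv cMx] scalar_prod_minus_distrib[OF cx lv cMx]
      v x Mx v_unit vx vMx lv cMx c_def[symmetric]
    by (simp add: power2_eq_square algebra_simps)
qed

lemma exists_tangent_hess_form_le_if_rayleigh_low:
  assumes x: "x \<in> carrier_vec n" and xx: "x \<bullet> x = 1"
    and grad: "vnorm (sphere_grad M x) \<le> 0.2 * (l1 - l2)"
    and low: "x \<bullet> (M *\<^sub>v x) < l2 + (l1 - l2) / 2"
  obtains u where "u \<in> carrier_vec n" and "x \<bullet> u = 0" and "u \<bullet> u = 1"
    and "u \<bullet> (sphere_hess M x *\<^sub>v u) \<le> - 0.3 * (l1 - l2)"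
proof -
  define c where "c = x \<bullet> v"
  define D where "D = l1 - x \<bullet> (M *\<^sub>v x)"
  define w where "w = v - c \<cdot>\<^sub>v x"
  note w = tangent_part_of_top_eigenvector[OF x xx, folded c_def, folded w_def]
  have c2: "c^2 \<le> 0.16" using top_component_small[OF x grad low] c_def by simp
  then have ww: "w \<bullet> w \<noteq> 0" using w(3) by simp
  define u where "u = (1 / sqrt (w \<bullet> w)) \<cdot>\<^sub>v w"
  have u: "u \<in> carrier_vec n" using w(1) by (simp add: u_def)
  have xu: "x \<bullet> u = 0" using w(1,2) x by (simp add: u_def)
  have uu: "u \<bullet> u = 1" unfolding u_def by (rule scalar_prod_self_normalize[OF w(1) ww])
  have "u \<bullet> (M *\<^sub>v u) = (w \<bullet> (M *\<^sub>v w)) / (w \<bullet> w)"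
    using w(1) M scalar_prod_self_nonneg[of w] by (simp add: u_def mult_mat_vec[OF M w(1)])
  then have "u \<bullet> (sphere_hess M x *\<^sub>v u) = - D * (1 - 2 * c^2) / (1 - c^2)"
    using sphere_hess_quadratic_form[OF M x u xu] uu w(3,4) c2 unfolding D_def
    by (simp add: field_simps)
  also have "\<dots> \<le> - 0.3 * (l1 - l2)"
  proof -
    have "(l1 - l2) / 2 \<le> D" using low unfolding D_def by argo
    then have "(l1 - l2) / 2 * (1 - 2 * c^2) \<le> D * (1 - 2 * c^2)"
      using c2 by (intro mult_right_mono) auto
    moreover have "(l1 - l2) * (7 * c^2) \<le> (l1 - l2) * 2" using c2 gap by (intro mult_left_mono) auto
    then have "0.3 * (l1 - l2) * (1 - c^2) \<le> (l1 - l2) / 2 * (1 - 2 * c^2)"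
      by (simp add: field_simps)
    ultimately show ?thesis using c2 by (simp add: field_simps)
  qed
  finally show thesis using that u xu uu by blast
qed

lemma abs_lambda_min_hess_ge:
  assumes n: "2 \<le> n" and x: "x \<in> carrier_vec n" and xx: "x \<bullet> x = 1"
    and grad: "vnorm (sphere_grad M x) \<le> 0.2 * (l1 - l2)"
  shows "0.3 * (l1 - l2) \<le> \<bar>lambda_min_hess M x\<bar>"
proof (cases "l2 + (l1 - l2) / 2 \<le> x \<bullet> (M *\<^sub>v x)")
  case True
  obtain u0 where u0: "u0 \<in> carrier_vec n" "x \<bullet> u0 = 0" "u0 \<bullet> u0 = 1"
    using exists_unit_orthogonal_vec[OF n x] .
  have "0.3 * (l1 - l2) \<le> lambda_min_hess M x"
    by (rule lambda_min_hess_ge[OF x u0 hess_form_ge_if_rayleigh_high[OF x xx grad True]])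
  then show ?thesis using abs_ge_self[of "lambda_min_hess M x"] by linarith
next
  case False
  then have "x \<bullet> (M *\<^sub>v x) < l2 + (l1 - l2) / 2" by simp
  then obtain u where u: "u \<in> carrier_vec n" "x \<bullet> u = 0" "u \<bullet> u = 1"
    and le: "u \<bullet> (sphere_hess M x *\<^sub>v u) \<le> - 0.3 * (l1 - l2)"
    by (rule exists_tangent_hess_form_le_if_rayleigh_low[OF x xx grad])
  have "lambda_min_hess M x \<le> - 0.3 * (l1 - l2)"
    by (rule lambda_min_hess_le[OF x hess_form_ge_rayleigh_minus_top[OF x] u le])
  then show ?thesis using abs_ge_minus_self[of "lambda_min_hess M x"] by linarith
qed

end

theorem theorem1:
  fixes N :: nat and M :: "real mat" and lam :: "nat \<Rightarrow> real" and x :: "real vec"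
  assumes "N \<ge> 2"
    and "M \<in> carrier_mat N N" and "transpose_mat M = M"
    and "char_poly M = (\<Prod>i<N. [:- lam i, 1:])"
    and "lam 0 > lam 1"
    and "\<And>i j. 1 \<le> i \<Longrightarrow> i \<le> j \<Longrightarrow> j < N \<Longrightarrow> lam j \<le> lam i"
    and "x \<in> carrier_vec N" and "vnorm x = 1"
    and "vnorm (sphere_grad M x) \<le> 0.2 * (lam 0 - lam 1)"
  shows "\<bar>lambda_min_hess M x\<bar> \<ge> 0.3 * (lam 0 - lam 1)"
proof -
  have "char_poly M = [:- lam 0, 1:] * (\<Prod>e\<leftarrow>map lam [1..<N]. [:- e, 1:])"
    using assms(1,4) prod_lessThan_linear_factors_split[of N lam] by simp
  then obtain v where "v \<in> carrier_vec N" "v \<bullet> v = 1" "M *\<^sub>v v = lam 0 \<cdot>\<^sub>v v"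
    "\<And>z. z \<in> carrier_vec N \<Longrightarrow> z \<bullet> v = 0 \<Longrightarrow> z \<bullet> (M *\<^sub>v z) \<le> lam 1 * (z \<bullet> z)"
    by (rule top_eigenvector_exists[OF assms(2,3)]) (use assms(6) in auto)
  then interpret spectral_gap M N v "lam 0" "lam 1"
    using assms(2,3,5) by unfold_locales auto
  have "x \<bullet> x = 1" using assms(8) unfolding vnorm_def by simp
  then show ?thesis using abs_lambda_min_hess_ge[OF assms(1,7) _ assms(9)] by simp
qed

end
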